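(* Let $1<\alpha<\beta$ be real numbers and let $S_{\alpha,\beta}:=\{r\in\mathbb{Q}_{>0}: r\in(\beta^{-1},\alpha^{-1})\cup(\alpha,\beta)\}$. Then $$\chi(G(S_{\alpha,\beta}))\le \left\lceil \frac{\log\alpha\beta}{\log\alpha}\right\rceil.$$
   Context: For $R\subseteq\mathbb{Q}_{>0}\setminus\{1\}$, $G(R)$ is the graph with vertex set $\mathbb{N}=\{1,2,\dots\}$ and edge set $\{\{m,n\}: m/n\in R\}$. $\chi$ denotes chromatic number. *)

theory Defs
  imports Complex_Main "HOL-Library.Extended_Nat"
begin

definition ratio_edge :: "rat set \<Rightarrow> nat \<Rightarrow> nat \<Rightarrow> bool" where
  "ratio_edge R m n \<longleftrightarrow> m \<ge> 1 \<and> n \<ge> 1 \<and> (of_nat m / of_nat n :: rat) \<in> R"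

definition ratio_colorable :: "rat set \<Rightarrow> nat \<Rightarrow> bool" where
  "ratio_colorable R k \<longleftrightarrow> (\<exists>c :: nat \<Rightarrow> nat.
      (\<forall>n\<ge>1. c n < k) \<and>
      (\<forall>m n. ratio_edge R m n \<or> ratio_edge R n m \<longrightarrow> c m \<noteq> c n))"

definition ratio_chi :: "rat set \<Rightarrow> enat" where
  "ratio_chi R = Inf {enat k | k. ratio_colorable R k}"

definition S_ab :: "real \<Rightarrow> real \<Rightarrow> rat set" where
  "S_ab \<alpha> \<beta> = {r. r > 0 \<and> ((1/\<beta> < of_rat r \<and> of_rat r < 1/\<alpha>) \<or> (\<alpha> < of_rat r \<and> of_rat r < \<beta>))}"

end

theory Submission
  imports Defs
begin

text \<open>Colour \<open>n\<close> by \<open>\<lfloor>log\<^sub>\<alpha> n\<rfloor> mod K\<close> with \<open>K = \<lceil>log\<^sub>\<alpha> (\<alpha>\<beta>)\<rceil>\<close>. If \<open>\<alpha> < m/n < \<beta>\<close>, then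
  \<open>log\<^sub>\<alpha> m - log\<^sub>\<alpha> n\<close> lies in \<open>(1, log\<^sub>\<alpha> \<beta>)\<close>, so the integer parts differ by an integer
  in \<open>[1, K - 1]\<close>, which is not divisible by \<open>K\<close>. The ratios in \<open>(\<beta>\<^sup>-\<^sup>1, \<alpha>\<^sup>-\<^sup>1)\<close> give the same
  edges with the endpoints swapped.\<close>

lemma ratio_chi_le:
  assumes "ratio_colorable R k"
  shows "ratio_chi R \<le> enat k"
  using assms unfolding ratio_chi_def by (auto intro: Inf_lower)

lemma ratio_colorable_mod:
  fixes f :: "nat \<Rightarrow> int" and k :: nat
  assumes "k > 0"
    and gap: "\<And>m n. ratio_edge R m n \<Longrightarrow> 0 < \<bar>f m - f n\<bar> \<and> \<bar>f m - f n\<bar> < int k"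
  shows "ratio_colorable R k"
  unfolding ratio_colorable_def
proof (intro exI[of _ "\<lambda>n. nat (f n mod int k)"] conjI allI impI)
  fix n :: nat
  show "nat (f n mod int k) < k" using \<open>k > 0\<close> by (simp add: nat_less_iff)
next
  fix m n
  assume "ratio_edge R m n \<or> ratio_edge R n m"
  then have "0 < \<bar>f m - f n\<bar>" "\<bar>f m - f n\<bar> < int k"
    using gap by (fastforce simp: abs_minus_commute)+
  then have "\<not> int k dvd f m - f n"
    using dvd_imp_le_int[of "f m - f n" "int k"] by auto
  moreover have "f m mod int k \<ge> 0" "f n mod int k \<ge> 0" using \<open>k > 0\<close> by simp_all
  ultimately show "nat (f m mod int k) \<noteq> nat (f n mod int k)"
    by (metis eq_nat_nat_iff mod_eq_dvd_iff)
qed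

lemma floor_diff_bounds:
  fixes x y L :: real
  assumes "1 \<le> x - y" and "x - y + 1 \<le> L"
  shows "1 \<le> \<lfloor>x\<rfloor> - \<lfloor>y\<rfloor>" and "\<lfloor>x\<rfloor> - \<lfloor>y\<rfloor> < \<lceil>L\<rceil>"
  using assms by linarith+

lemma floor_log_diff_bounds:
  fixes a b x y :: real
  assumes "1 < a" "0 < x" "0 < y" "a < x / y" "x / y < b"
  shows "1 \<le> \<lfloor>log a x\<rfloor> - \<lfloor>log a y\<rfloor>" and "\<lfloor>log a x\<rfloor> - \<lfloor>log a y\<rfloor> < \<lceil>log a (a * b)\<rceil>"
proof -
  have "log a x - log a y = log a (x / y)" using assms by (simp add: log_divide)
  moreover have "1 < log a (x / y)" using assms by (simp add: log_less_iff)
  moreover have "log a (x / y) < log a b" using assms by simp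
  moreover have "log a (a * b) = 1 + log a b" using assms by (simp add: log_mult)
  ultimately have "1 \<le> log a x - log a y" "log a x - log a y + 1 \<le> log a (a * b)"
    by linarith+
  then show "1 \<le> \<lfloor>log a x\<rfloor> - \<lfloor>log a y\<rfloor>" "\<lfloor>log a x\<rfloor> - \<lfloor>log a y\<rfloor> < \<lceil>log a (a * b)\<rceil>"
    by (rule floor_diff_bounds)+
qed

lemma ratio_edge_S_ab_cases:
  fixes \<alpha> \<beta> :: real
  assumes "ratio_edge (S_ab \<alpha> \<beta>) m n" and "0 < \<alpha>" and "0 < \<beta>"
  obtains "\<alpha> < real m / real n" "real m / real n < \<beta>"
    | "\<alpha> < real n / real m" "real n / real m < \<beta>"
proof -
  have "m \<ge> 1" "n \<ge> 1" and
    ratio: "1/\<beta> < real m / real n \<and> real m / real n < 1/\<alpha> \<or> \<alpha> < real m / real n \<and> real m / real n < \<beta>"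
    using assms(1) unfolding ratio_edge_def S_ab_def by (auto simp: of_rat_divide)
  then have "0 < real m" "0 < real n" by simp_all
  then have "1/\<beta> < real m / real n \<longleftrightarrow> real n / real m < \<beta>"
    and "real m / real n < 1/\<alpha> \<longleftrightarrow> \<alpha> < real n / real m"
    using assms(2,3) by (simp_all add: field_simps)
  then show thesis using ratio that by blast
qed

theorem proposition2p2:
  fixes \<alpha> \<beta> :: real
  assumes "1 < \<alpha>" and "\<alpha> < \<beta>"
  shows "ratio_chi (S_ab \<alpha> \<beta>) \<le> enat (nat \<lceil>ln (\<alpha> * \<beta>) / ln \<alpha>\<rceil>)"
proof -
  let ?K = "\<lceil>log \<alpha> (\<alpha> * \<beta>)\<rceil>"
  have "1 < log \<alpha> (\<alpha> * \<beta>)" using assms by (simp add: log_mult)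
  then have "nat ?K > 0" by linarith
  moreover have "0 < \<bar>\<lfloor>log \<alpha> m\<rfloor> - \<lfloor>log \<alpha> n\<rfloor>\<bar> \<and> \<bar>\<lfloor>log \<alpha> m\<rfloor> - \<lfloor>log \<alpha> n\<rfloor>\<bar> < int (nat ?K)"
    if edge: "ratio_edge (S_ab \<alpha> \<beta>) m n" for m n :: nat
  proof -
    have "m \<ge> 1" "n \<ge> 1" using edge by (simp_all add: ratio_edge_def)
    then have pos: "0 < real m" "0 < real n" by simp_all
    have "0 < \<alpha>" "0 < \<beta>" using assms by simp_all
    show ?thesis
    proof (rule ratio_edge_S_ab_cases[OF edge \<open>0 < \<alpha>\<close> \<open>0 < \<beta>\<close>])
      assume "\<alpha> < real m / real n" "real m / real n < \<beta>"
      from floor_log_diff_bounds[OF \<open>1 < \<alpha>\<close> pos this] show ?thesis by linarith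
    next
      assume "\<alpha> < real n / real m" "real n / real m < \<beta>"
      from floor_log_diff_bounds[OF \<open>1 < \<alpha>\<close> pos(2,1) this] show ?thesis by linarith
    qed
  qed
  ultimately have "ratio_colorable (S_ab \<alpha> \<beta>) (nat ?K)"
    by (rule ratio_colorable_mod[where f = "\<lambda>n. \<lfloor>log \<alpha> (real n)\<rfloor>"])
  then show ?thesis by (simp add: ratio_chi_le log_def)
qed

end
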